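(* Let $T$ and $A$ be closed Hermitian subspaces in $X^2$ and $S$ a self-adjoint subspace in $X^2$, with $D(T)=D(S)=:D\subset D(A)$ and $T=S+A$. Then $$A(0)\subset S(0)=T(0),$$ and, with $Q:A(0)^\perp\to S(0)^\perp$ the orthogonal projection, $$T_sx=S_sx+QA_sx\quad\text{for all }x\in D.$$
   Context: $X$ is a complex Hilbert space and $X^2=X\times X$ carries the inner product $\langle (x,f),(y,g)\rangle=\langle x,y\rangle+\langle f,g\rangle$. A subspace $T$ in $X^2$ means a linear subspace of $X^2$ (a linear relation); a linear operator in $X$ is identified with its graph. Notation: $D(T)=\{x:(x,f)\in T \text{ for some } f\}$, $T(x)=\{f:(x,f)\in T\}$. The adjoint is $T^*=\{(y,g)\in X^2:\langle g,x\rangle=\langle y,f\rangle \text{ for all }(x,f)\in T\}$; $T$ is Hermitian if $T\subset T^*$ and self-adjoint if $T=T^*$. For subspaces $S,A$ in $X^2$, $S+A=\{(x,f+g):(x,f)\in S,(x,g)\in A\}$. For a closed subspace $T$, set $T_\infty=\{(0,g)\in X^2:(0,g)\in T\}$ and $T_s=T\ominus T_\infty$ (orthogonal complement of $T_\infty$ in $T$), so $T=T_s\oplus T_\infty$; $T_s$ is the graph of a linear operator (the operator part of $T$) with $D(T_s)=D(T)$ and $R(T_s)\subset T(0)^\perp$. *)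

theory Defs
  imports "HOL-Analysis.Analysis"
begin

class cvector = real_vector +
  fixes scaleC :: "complex \<Rightarrow> 'a \<Rightarrow> 'a" (infixr \<open>*\<^sub>C\<close> 75)
  assumes scaleC_add_right: "a *\<^sub>C (x + y) = a *\<^sub>C x + a *\<^sub>C y"
    and scaleC_add_left: "(a + b) *\<^sub>C x = a *\<^sub>C x + b *\<^sub>C x"
    and scaleC_scaleC: "a *\<^sub>C (b *\<^sub>C x) = (a * b) *\<^sub>C x"
    and scaleC_one: "1 *\<^sub>C x = x"
    and scaleR_scaleC: "scaleR r = scaleC (complex_of_real r)"

class complex_inner = cvector + real_normed_vector +
  fixes cinner :: "'a \<Rightarrow> 'a \<Rightarrow> complex"
  assumes cinner_commute: "cinner x y = cnj (cinner y x)"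
    and cinner_add_left: "cinner (x + y) z = cinner x z + cinner y z"
    and cinner_scaleC_left: "cinner (a *\<^sub>C x) y = a * cinner x y"
    and cinner_real: "Im (cinner x x) = 0"
    and cinner_ge_zero: "0 \<le> Re (cinner x x)"
    and cinner_eq_zero_iff: "cinner x x = 0 \<longleftrightarrow> x = 0"
    and norm_eq_sqrt_cinner: "norm x = sqrt (Re (cinner x x))"

class complex_hilbert = complex_inner + complete_space

definition pinner :: "'a::complex_inner \<times> 'a \<Rightarrow> 'a \<times> 'a \<Rightarrow> complex" where
  "pinner p q = cinner (fst p) (fst q) + cinner (snd p) (snd q)"

definition lin_rel :: "('a::complex_inner \<times> 'a) set \<Rightarrow> bool" where
  "lin_rel T \<longleftrightarrow> (0, 0) \<in> T
     \<and> (\<forall>x f y g. (x, f) \<in> T \<longrightarrow> (y, g) \<in> T \<longrightarrow> (x + y, f + g) \<in> T)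
     \<and> (\<forall>c x f. (x, f) \<in> T \<longrightarrow> (c *\<^sub>C x, c *\<^sub>C f) \<in> T)"

definition rdom :: "('a \<times> 'a) set \<Rightarrow> 'a set" where
  "rdom T = {x. \<exists>f. (x, f) \<in> T}"

definition rimg :: "('a \<times> 'a) set \<Rightarrow> 'a \<Rightarrow> 'a set" where
  "rimg T x = {f. (x, f) \<in> T}"

definition adjoint :: "('a::complex_inner \<times> 'a) set \<Rightarrow> ('a \<times> 'a) set" where
  "adjoint T = {(y, g). \<forall>x f. (x, f) \<in> T \<longrightarrow> cinner g x = cinner y f}"

definition hermitian :: "('a::complex_inner \<times> 'a) set \<Rightarrow> bool" where
  "hermitian T \<longleftrightarrow> T \<subseteq> adjoint T"

definition selfadjoint :: "('a::complex_inner \<times> 'a) set \<Rightarrow> bool" where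
  "selfadjoint T \<longleftrightarrow> T = adjoint T"

definition rel_sum :: "('a::complex_inner \<times> 'a) set \<Rightarrow> ('a \<times> 'a) set \<Rightarrow> ('a \<times> 'a) set" where
  "rel_sum S A = {(x, f + g) | x f g. (x, f) \<in> S \<and> (x, g) \<in> A}"

definition rel_inf :: "('a::complex_inner \<times> 'a) set \<Rightarrow> ('a \<times> 'a) set" where
  "rel_inf T = {(0, g) | g. (0, g) \<in> T}"

definition rel_ominus :: "('a::complex_inner \<times> 'a) set \<Rightarrow> ('a \<times> 'a) set \<Rightarrow> ('a \<times> 'a) set" where
  "rel_ominus T U = {p \<in> T. \<forall>q \<in> U. pinner p q = 0}"

definition rel_s :: "('a::complex_inner \<times> 'a) set \<Rightarrow> ('a \<times> 'a) set" where
  "rel_s T = rel_ominus T (rel_inf T)"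

definition op_part :: "('a::complex_inner \<times> 'a) set \<Rightarrow> 'a \<Rightarrow> 'a" where
  "op_part T x = (THE f. (x, f) \<in> rel_s T)"

definition orth :: "'a::complex_inner set \<Rightarrow> 'a set" where
  "orth M = {v. \<forall>m \<in> M. cinner v m = 0}"

definition oproj :: "'a::complex_inner set \<Rightarrow> 'a \<Rightarrow> 'a" where
  "oproj M v = (THE w. w \<in> M \<and> (\<forall>m \<in> M. cinner (v - w) m = 0))"

end

theory Submission
  imports Defs
begin

text \<open>
  Self-adjointness gives \<open>S(0) = D(S)\<^sup>\<bottom>\<close>, and hermiticity of \<open>A\<close> gives
  \<open>A(0) \<subseteq> D(A)\<^sup>\<bottom> \<subseteq> D(S)\<^sup>\<bottom>\<close>; hence \<open>T(0) = S(0) + A(0) = S(0)\<close>.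
  For \<open>x \<in> D\<close> split \<open>A\<^sub>s x = r + Q A\<^sub>s x\<close> with \<open>r \<in> S(0)\<close>. Then
  \<open>(x, S\<^sub>s x - r) \<in> S\<close>, so \<open>(x, S\<^sub>s x + Q A\<^sub>s x) \<in> T\<close>, and its second component is
  orthogonal to \<open>T(0) = S(0)\<close>; it is therefore \<open>T\<^sub>s x\<close>. Both projections exist by the projection
  theorem for closed subspaces: by the parallelogram law a minimising sequence for the distance
  is Cauchy, and the minimiser is characterised by orthogonality.
\<close>

lemma scaleC_minus_one: "(-1) *\<^sub>C (x::'a::cvector) = - x"
  using fun_cong[OF scaleR_scaleC[of "-1"], of x] by simp

lemma scaleC_zero_right [simp]: "a *\<^sub>C (0::'a::cvector) = 0"
  using scaleC_add_right[of a 0 0] by simp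

lemma cinner_zero_left [simp]: "cinner 0 (y::'a::complex_inner) = 0"
  using cinner_add_left[of 0 0 y] by simp

lemma cinner_zero_right [simp]: "cinner (x::'a::complex_inner) 0 = 0"
  by (subst cinner_commute) simp

lemma cinner_minus_left: "cinner (- x) (y::'a::complex_inner) = - cinner x y"
  using cinner_add_left[of x "- x" y] by (simp add: add_eq_0_iff)

lemma cinner_diff_left: "cinner (x - y) (z::'a::complex_inner) = cinner x z - cinner y z"
  using cinner_add_left[of x "- y" z] by (simp add: cinner_minus_left)

lemma cinner_add_right: "cinner (x::'a::complex_inner) (y + z) = cinner x y + cinner x z"
  by (subst (1 2 3) cinner_commute) (simp add: cinner_add_left)

lemma cinner_diff_right: "cinner (x::'a::complex_inner) (y - z) = cinner x y - cinner x z"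
  by (subst (1 2 3) cinner_commute) (simp add: cinner_diff_left)

lemma cinner_scaleC_right: "cinner (x::'a::complex_inner) (a *\<^sub>C y) = cnj a * cinner x y"
  by (subst (1 2) cinner_commute) (simp add: cinner_scaleC_left)

lemma cinner_self: "cinner x (x::'a::complex_inner) = complex_of_real ((norm x)\<^sup>2)"
  using cinner_real[of x] cinner_ge_zero[of x] norm_eq_sqrt_cinner[of x]
  by (simp add: complex_eq_iff)

lemma norm_diff_scaleC_square:
  fixes u m :: "'a::complex_inner"
  shows "(norm (u - t *\<^sub>C m))\<^sup>2
    = (norm u)\<^sup>2 - 2 * Re (cnj t * cinner u m) + (cmod t)\<^sup>2 * (norm m)\<^sup>2"
proof -
  have "cinner (u - t *\<^sub>C m) (u - t *\<^sub>C m)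
      = cinner u u - (cnj t * cinner u m + cnj (cnj t * cinner u m)) + t * cnj t * cinner m m"
    by (simp add: cinner_diff_left cinner_diff_right cinner_scaleC_left cinner_scaleC_right
        cinner_commute[of m u] algebra_simps)
  also have "cnj t * cinner u m + cnj (cnj t * cinner u m) = complex_of_real (2 * Re (cnj t * cinner u m))"
    by (rule complex_add_cnj)
  also have "t * cnj t = complex_of_real ((cmod t)\<^sup>2)"
    by (rule complex_norm_square[symmetric])
  finally show ?thesis
    unfolding cinner_self of_real_diff[symmetric] of_real_mult[symmetric] of_real_add[symmetric]
      of_real_eq_iff .
qed

lemma norm_diff_scaleC_cinner_square:
  fixes u m :: "'a::complex_inner"
  shows "(norm (u - (complex_of_real r * cinner u m) *\<^sub>C m))\<^sup>2
    = (norm u)\<^sup>2 - (2 * r - r\<^sup>2 * (norm m)\<^sup>2) * (cmod (cinner u m))\<^sup>2"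
proof -
  have "Re (cnj (complex_of_real r * cinner u m) * cinner u m) = r * (cmod (cinner u m))\<^sup>2"
    unfolding cmod_power2 by (simp add: algebra_simps power2_eq_square)
  then show ?thesis
    unfolding norm_diff_scaleC_square by (simp add: norm_mult power_mult_distrib algebra_simps)
qed

lemma cauchy_schwarz: "cmod (cinner x y) \<le> norm x * norm (y::'a::complex_inner)"
proof (cases "y = 0")
  case False
  define n where "n = (norm y)\<^sup>2"
  have "n > 0" using False by (simp add: n_def)
  have "0 \<le> (norm (x - (complex_of_real (1 / n) * cinner x y) *\<^sub>C y))\<^sup>2" by simp
  also have "\<dots> = (norm x)\<^sup>2 - (2 * (1 / n) - (1 / n)\<^sup>2 * n) * (cmod (cinner x y))\<^sup>2"
    unfolding norm_diff_scaleC_cinner_square n_def ..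
  also have "2 * (1 / n) - (1 / n)\<^sup>2 * n = 1 / n"
    using \<open>n > 0\<close> by (simp add: power2_eq_square)
  finally have "(cmod (cinner x y))\<^sup>2 \<le> (norm x)\<^sup>2 * n"
    using \<open>n > 0\<close> by (simp add: pos_divide_le_eq)
  then have "(cmod (cinner x y))\<^sup>2 \<le> (norm x * norm y)\<^sup>2"
    by (simp add: n_def power_mult_distrib)
  then show ?thesis by (rule power2_le_imp_le) simp
qed simp

lemma parallelogram_law:
  "(norm (a + b))\<^sup>2 + (norm (a - b))\<^sup>2 = 2 * (norm a)\<^sup>2 + 2 * (norm (b::'a::complex_inner))\<^sup>2"
proof -
  have "cinner (a + b) (a + b) + cinner (a - b) (a - b) = 2 * cinner a a + 2 * cinner b b"
    by (simp add: cinner_add_left cinner_add_right cinner_diff_left cinner_diff_right)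
  then have "complex_of_real ((norm (a + b))\<^sup>2 + (norm (a - b))\<^sup>2)
      = complex_of_real (2 * (norm a)\<^sup>2 + 2 * (norm b)\<^sup>2)"
    by (simp add: cinner_self)
  then show ?thesis by (simp only: of_real_eq_iff)
qed

lemma bounded_linear_cinner_left: "bounded_linear (\<lambda>v::'a::complex_inner. cinner v m)"
proof (rule bounded_linear_intro[where K = "norm m"])
  show "cinner (r *\<^sub>R x) m = r *\<^sub>R cinner x m" for r x
    by (simp add: scaleR_scaleC cinner_scaleC_left scaleR_conv_of_real)
qed (simp_all add: cinner_add_left cauchy_schwarz)

lemma closed_orth: "closed (orth (M::'a::complex_inner set))"
proof -
  have "orth M = (\<Inter>m\<in>M. (\<lambda>v. cinner v m) -` {0})" unfolding orth_def by auto
  moreover have "closed ((\<lambda>v::'a. cinner v m) -` {0})" for m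
    by (intro continuous_closed_vimage linear_continuous_at bounded_linear_cinner_left) simp
  ultimately show ?thesis by auto
qed

definition csubspace :: "'a::complex_inner set \<Rightarrow> bool" where
  "csubspace M \<longleftrightarrow> 0 \<in> M \<and> (\<forall>x\<in>M. \<forall>y\<in>M. x + y \<in> M) \<and> (\<forall>c. \<forall>x\<in>M. c *\<^sub>C x \<in> M)"

lemma csubspace_diff: "csubspace M \<Longrightarrow> x \<in> M \<Longrightarrow> y \<in> M \<Longrightarrow> x - y \<in> M"
  unfolding csubspace_def using scaleC_minus_one[of y] by (metis diff_conv_add_uminus)

lemma csubspace_orth: "csubspace (orth (N::'a::complex_inner set))"
  unfolding csubspace_def orth_def by (simp add: cinner_add_left cinner_scaleC_left)

lemma orth_antimono: "N \<subseteq> K \<Longrightarrow> orth K \<subseteq> orth N"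
  unfolding orth_def by auto

lemma subset_orth_orth: "(N::'a::complex_inner set) \<subseteq> orth (orth N)"
proof
  fix x assume "x \<in> N"
  have "cinner x m = cnj (cinner m x)" for m by (rule cinner_commute)
  with \<open>x \<in> N\<close> show "x \<in> orth (orth N)" unfolding orth_def by simp
qed

lemma mem_orth_self_eq_0: "x \<in> M \<Longrightarrow> x \<in> orth M \<Longrightarrow> (x::'a::complex_inner) = 0"
  unfolding orth_def using cinner_eq_zero_iff by blast

lemma norm_diff_square_le_midpoint:
  fixes v a b :: "'a::complex_inner"
  assumes "0 \<le> d" and "d \<le> norm (v - (1/2) *\<^sub>R (a + b))"
  shows "(norm (a - b))\<^sup>2 \<le> 2 * ((norm (v - a))\<^sup>2 - d\<^sup>2) + 2 * ((norm (v - b))\<^sup>2 - d\<^sup>2)"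
proof -
  have "(v - a) + (v - b) = 2 *\<^sub>R (v - (1/2) *\<^sub>R (a + b))"
    by (simp add: algebra_simps scaleR_2)
  then have "(norm ((v - a) + (v - b)))\<^sup>2 = 4 * (norm (v - (1/2) *\<^sub>R (a + b)))\<^sup>2"
    by (simp add: power2_eq_square)
  moreover have "d\<^sup>2 \<le> (norm (v - (1/2) *\<^sub>R (a + b)))\<^sup>2"
    using assms by (simp add: power_mono)
  moreover have "(norm ((v - a) - (v - b)))\<^sup>2 = (norm (a - b))\<^sup>2"
    by (simp add: norm_minus_commute)
  ultimately show ?thesis
    using parallelogram_law[of "v - a" "v - b"] by argo
qed

lemma Cauchy_if_norm_diff_square_le:
  fixes X :: "nat \<Rightarrow> 'a::real_normed_vector"
  assumes e: "e \<longlonglongrightarrow> 0" and bound: "\<And>m n. (norm (X m - X n))\<^sup>2 \<le> e m + e n"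
  shows "Cauchy X"
proof (rule CauchyI)
  fix r :: real assume "0 < r"
  then have "eventually (\<lambda>n. e n < r\<^sup>2 / 2) sequentially"
    by (intro order_tendstoD(2)[OF e]) simp
  then obtain N where N: "\<And>n. N \<le> n \<Longrightarrow> e n < r\<^sup>2 / 2"
    unfolding eventually_sequentially by blast
  have "norm (X m - X n) < r" if "N \<le> m" "N \<le> n" for m n
  proof -
    have "(norm (X m - X n))\<^sup>2 < r\<^sup>2"
      using bound[of m n] N[OF that(1)] N[OF that(2)] by linarith
    then show ?thesis using \<open>0 < r\<close> by (simp add: power_less_imp_less_base)
  qed
  then show "\<exists>N. \<forall>m\<ge>N. \<forall>n\<ge>N. norm (X m - X n) < r" by blast
qed

lemma closest_point_exists:
  fixes M :: "'a::complex_hilbert set"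
  assumes M: "csubspace M" and "closed M"
  shows "\<exists>w\<in>M. \<forall>m\<in>M. norm (v - w) \<le> norm (v - m)"
proof -
  define d where "d = infdist v M"
  have "M \<noteq> {}" using M unfolding csubspace_def by blast
  have d_le: "d \<le> norm (v - m)" if "m \<in> M" for m
    using infdist_le[OF that, of v] by (simp add: d_def dist_norm)
  have "\<exists>m\<in>M. norm (v - m) < d + inverse (real (Suc n))" for n
  proof -
    have "(INF m\<in>M. dist v m) < d + inverse (real (Suc n))"
      using infdist_notempty[OF \<open>M \<noteq> {}\<close>] by (simp add: d_def)
    then show ?thesis
      using cInf_lessD[of "(\<lambda>m. dist v m) ` M"] \<open>M \<noteq> {}\<close> by (auto simp: dist_norm)
  qed
  then obtain ms where ms_mem: "\<And>n. ms n \<in> M"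
    and ms_close: "\<And>n. norm (v - ms n) < d + inverse (real (Suc n))" by metis
  define e where "e n = 2 * ((d + inverse (real (Suc n)))\<^sup>2 - d\<^sup>2)" for n
  have "Cauchy ms"
  proof (rule Cauchy_if_norm_diff_square_le)
    have "e \<longlonglongrightarrow> 2 * (d\<^sup>2 - d\<^sup>2)"
      unfolding e_def by (intro tendsto_intros LIMSEQ_inverse_real_of_nat_add)
    then show "e \<longlonglongrightarrow> 0" by simp
    fix m n
    have "(1/2) *\<^sub>R (ms m + ms n) \<in> M"
      using M ms_mem unfolding csubspace_def scaleR_scaleC by blast
    then have mid: "(norm (ms m - ms n))\<^sup>2
        \<le> 2 * ((norm (v - ms m))\<^sup>2 - d\<^sup>2) + 2 * ((norm (v - ms n))\<^sup>2 - d\<^sup>2)"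
      by (intro norm_diff_square_le_midpoint d_le) (simp add: d_def infdist_nonneg)
    have close: "(norm (v - ms k))\<^sup>2 \<le> (d + inverse (real (Suc k)))\<^sup>2" for k
      using ms_close[of k] by (intro power_mono) simp_all
    show "(norm (ms m - ms n))\<^sup>2 \<le> e m + e n"
      unfolding e_def using mid close[of m] close[of n] by argo
  qed
  then obtain w where lim: "ms \<longlonglongrightarrow> w"
    using Cauchy_convergent convergent_def by blast
  have "w \<in> M" using closed_sequentially[OF \<open>closed M\<close> ms_mem lim] .
  moreover have "norm (v - w) \<le> d"
  proof (rule LIMSEQ_le)
    show "(\<lambda>n. norm (v - ms n)) \<longlonglongrightarrow> norm (v - w)" by (intro tendsto_intros lim)
    show "(\<lambda>n. d + inverse (real (Suc n))) \<longlonglongrightarrow> d"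
      by (rule LIMSEQ_inverse_real_of_nat_add)
  qed (use ms_close less_imp_le in blast)
  ultimately show ?thesis using d_le order_trans by blast
qed

lemma closest_point_orthogonal:
  fixes M :: "'a::complex_inner set"
  assumes M: "csubspace M" and "w \<in> M" and closest: "\<And>m. m \<in> M \<Longrightarrow> norm (v - w) \<le> norm (v - m)"
  shows "v - w \<in> orth M"
proof -
  have "cinner (v - w) m = 0" if "m \<in> M" for m
  proof -
    txt \<open>Moving \<open>w\<close> along \<open>m\<close> by the weight \<open>r\<close>, with \<open>0 < r < 2 / \<parallel>m\<parallel>\<^sup>2\<close>,
      would get strictly closer to \<open>v\<close> unless \<open>cinner (v - w) m = 0\<close>.\<close>
    define r where "r = 1 / ((norm m)\<^sup>2 + 1)"
    define t where "t = complex_of_real r * cinner (v - w) m"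
    have r_pos: "0 < r" and "r * (norm m)\<^sup>2 < 1"
      unfolding r_def by (simp_all add: add_pos_nonneg field_simps)
    then have weight_pos: "0 < 2 * r - r\<^sup>2 * (norm m)\<^sup>2"
      by (simp add: power2_eq_square algebra_simps)
    have "w + t *\<^sub>C m \<in> M" using M \<open>w \<in> M\<close> that unfolding csubspace_def by blast
    then have "(norm (v - w))\<^sup>2 \<le> (norm ((v - w) - t *\<^sub>C m))\<^sup>2"
      using closest by (simp add: power_mono diff_diff_eq)
    also have "\<dots> = (norm (v - w))\<^sup>2 - (2 * r - r\<^sup>2 * (norm m)\<^sup>2) * (cmod (cinner (v - w) m))\<^sup>2"
      unfolding t_def by (rule norm_diff_scaleC_cinner_square)
    finally have "(2 * r - r\<^sup>2 * (norm m)\<^sup>2) * (cmod (cinner (v - w) m))\<^sup>2 \<le> 0" by simp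
    with weight_pos show ?thesis by (simp add: mult_le_0_iff)
  qed
  then show ?thesis unfolding orth_def by blast
qed

lemma oproj_eqI:
  assumes "csubspace M" and "w \<in> M" and "v - w \<in> orth M"
  shows "oproj M v = w"
  unfolding oproj_def
proof (rule the_equality)
  show "w \<in> M \<and> (\<forall>m\<in>M. cinner (v - w) m = 0)" using assms(2,3) unfolding orth_def by blast
  fix w' assume w': "w' \<in> M \<and> (\<forall>m\<in>M. cinner (v - w') m = 0)"
  have "w' - w \<in> M" using csubspace_diff[OF assms(1)] w' assms(2) by blast
  moreover have "v - w' \<in> orth M" using w' unfolding orth_def by blast
  then have "(v - w) - (v - w') \<in> orth M" using csubspace_diff[OF csubspace_orth] assms(3) by blast
  then have "w' - w \<in> orth M" by simp
  ultimately show "w' = w" using mem_orth_self_eq_0 by fastforce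
qed

lemma oproj_mem_orth:
  fixes M :: "'a::complex_hilbert set"
  assumes "csubspace M" and "closed M"
  shows "oproj M v \<in> M \<and> v - oproj M v \<in> orth M"
proof -
  obtain w where "w \<in> M" and "\<forall>m\<in>M. norm (v - w) \<le> norm (v - m)"
    using closest_point_exists[OF assms] by blast
  moreover from this have "v - w \<in> orth M" using closest_point_orthogonal[OF assms(1)] by blast
  ultimately show ?thesis using oproj_eqI[OF assms(1)] by simp
qed

lemma lin_rel_diff:
  assumes "lin_rel T" and "(x, f) \<in> T" and "(y, g) \<in> T"
  shows "(x - y, f - g) \<in> T"
proof -
  have "((-1) *\<^sub>C y, (-1) *\<^sub>C g) \<in> T" using assms(1,3) unfolding lin_rel_def by blast
  then have "(x + (-1) *\<^sub>C y, f + (-1) *\<^sub>C g) \<in> T" using assms(1,2) unfolding lin_rel_def by blast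
  then show ?thesis by (simp add: scaleC_minus_one)
qed

lemma rel_sum_memI: "(x, f) \<in> S \<Longrightarrow> (x, g) \<in> A \<Longrightarrow> (x, f + g) \<in> rel_sum S A"
  unfolding rel_sum_def by blast

lemma rel_sum_memE:
  assumes "(x, h) \<in> rel_sum S A"
  obtains f g where "(x, f) \<in> S" and "(x, g) \<in> A" and "h = f + g"
  using assms unfolding rel_sum_def by blast

lemma lin_rel_rel_sum:
  assumes S: "lin_rel S" and A: "lin_rel A"
  shows "lin_rel (rel_sum S A)"
  unfolding lin_rel_def
proof (intro conjI allI impI)
  show "(0, 0) \<in> rel_sum S A"
    using rel_sum_memI[of 0 0 S 0 A] S A unfolding lin_rel_def by simp
next
  fix x h y k assume "(x, h) \<in> rel_sum S A" and "(y, k) \<in> rel_sum S A"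
  then obtain f g f' g' where "(x, f) \<in> S" "(x, g) \<in> A" "h = f + g"
    and "(y, f') \<in> S" "(y, g') \<in> A" "k = f' + g'" by (metis rel_sum_memE)
  with S A have "(x + y, (f + f') + (g + g')) \<in> rel_sum S A"
    unfolding lin_rel_def by (blast intro: rel_sum_memI)
  then show "(x + y, h + k) \<in> rel_sum S A" by (simp add: \<open>h = f + g\<close> \<open>k = f' + g'\<close> algebra_simps)
next
  fix c x h assume "(x, h) \<in> rel_sum S A"
  then obtain f g where "(x, f) \<in> S" "(x, g) \<in> A" "h = f + g" by (rule rel_sum_memE)
  with S A have "(c *\<^sub>C x, c *\<^sub>C f + c *\<^sub>C g) \<in> rel_sum S A"
    unfolding lin_rel_def by (blast intro: rel_sum_memI)
  then show "(c *\<^sub>C x, c *\<^sub>C h) \<in> rel_sum S A" by (simp add: \<open>h = f + g\<close> scaleC_add_right)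
qed

lemma csubspace_rimg_0:
  assumes T: "lin_rel T"
  shows "csubspace (rimg T 0)"
  unfolding csubspace_def rimg_def
proof (intro conjI ballI allI)
  show "0 \<in> {f. (0, f) \<in> T}" using T unfolding lin_rel_def by simp
next
  fix f g assume "f \<in> {f. (0, f) \<in> T}" "g \<in> {f. (0, f) \<in> T}"
  then show "f + g \<in> {f. (0, f) \<in> T}" using T unfolding lin_rel_def by force
next
  fix c f assume "f \<in> {f. (0, f) \<in> T}"
  then have "(c *\<^sub>C 0, c *\<^sub>C f) \<in> T" using T unfolding lin_rel_def by blast
  then show "c *\<^sub>C f \<in> {f. (0, f) \<in> T}" by simp
qed

lemma closed_rimg: "closed T \<Longrightarrow> closed (rimg T x)"
proof -
  assume "closed T"
  have "rimg T x = Pair x -` T" unfolding rimg_def by auto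
  also have "closed \<dots>" by (intro continuous_closed_vimage \<open>closed T\<close> continuous_intros)
  finally show ?thesis .
qed

lemma rimg_adjoint_0: "rimg (adjoint T) 0 = orth (rdom T)"
  unfolding rimg_def adjoint_def orth_def rdom_def by auto

lemma hermitian_rimg_0_subset: "hermitian T \<Longrightarrow> rimg T 0 \<subseteq> orth (rdom T)"
  unfolding hermitian_def rimg_adjoint_0[symmetric] rimg_def by auto

lemma selfadjoint_rimg_0: "selfadjoint T \<Longrightarrow> rimg T 0 = orth (rdom T)"
  unfolding selfadjoint_def by (metis rimg_adjoint_0)

lemma mem_rel_s_iff: "(x, f) \<in> rel_s T \<longleftrightarrow> (x, f) \<in> T \<and> f \<in> orth (rimg T 0)"
  unfolding rel_s_def rel_ominus_def rel_inf_def pinner_def rimg_def orth_def by auto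

lemma op_part_eqI:
  assumes T: "lin_rel T" and f: "(x, f) \<in> T" and "f \<in> orth (rimg T 0)"
  shows "op_part T x = f"
  unfolding op_part_def
proof (rule the_equality)
  show "(x, f) \<in> rel_s T" using assms by (simp add: mem_rel_s_iff)
  fix f' assume "(x, f') \<in> rel_s T"
  then have "(x, f') \<in> T" and f': "f' \<in> orth (rimg T 0)" by (simp_all add: mem_rel_s_iff)
  then have "(x - x, f' - f) \<in> T" using lin_rel_diff[OF T _ f] by blast
  then have "f' - f \<in> rimg T 0" by (simp add: rimg_def)
  moreover have "f' - f \<in> orth (rimg T 0)"
    using csubspace_diff[OF csubspace_orth f' \<open>f \<in> orth (rimg T 0)\<close>] .
  ultimately show "f' = f" using mem_orth_self_eq_0 by fastforce
qed

lemma op_part_mem: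
  fixes T :: "('a::complex_hilbert \<times> 'a) set"
  assumes T: "lin_rel T" and "closed (rimg T 0)" and "x \<in> rdom T"
  shows "(x, op_part T x) \<in> T \<and> op_part T x \<in> orth (rimg T 0)"
proof -
  obtain f where f: "(x, f) \<in> T" using assms(3) unfolding rdom_def by blast
  define p where "p = oproj (rimg T 0) f"
  have "p \<in> rimg T 0" and f_p: "f - p \<in> orth (rimg T 0)"
    using oproj_mem_orth[OF csubspace_rimg_0[OF T] assms(2)] unfolding p_def by blast+
  then have "(x - 0, f - p) \<in> T" using lin_rel_diff[OF T f, of 0 p] by (simp add: rimg_def)
  with f_p show ?thesis using op_part_eqI[OF T] by simp
qed

lemma rimg_rel_sum_0:
  assumes S: "lin_rel S" and A: "lin_rel A" and A_S: "rimg A 0 \<subseteq> rimg S 0"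
  shows "rimg (rel_sum S A) 0 = rimg S 0"
proof
  show "rimg S 0 \<subseteq> rimg (rel_sum S A) 0"
  proof
    fix f assume "f \<in> rimg S 0"
    moreover have "(0, 0) \<in> A" using A unfolding lin_rel_def by blast
    ultimately have "(0, f + 0) \<in> rel_sum S A" unfolding rimg_def by (blast intro: rel_sum_memI)
    then show "f \<in> rimg (rel_sum S A) 0" by (simp add: rimg_def)
  qed
  show "rimg (rel_sum S A) 0 \<subseteq> rimg S 0"
  proof
    fix h assume "h \<in> rimg (rel_sum S A) 0"
    then obtain f g where "f \<in> rimg S 0" "g \<in> rimg A 0" "h = f + g"
      unfolding rimg_def by (auto elim: rel_sum_memE)
    then show "h \<in> rimg S 0"
      using A_S csubspace_rimg_0[OF S] unfolding csubspace_def by blast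
  qed
qed

lemma op_part_rel_sum:
  fixes S A :: "('a::complex_hilbert \<times> 'a) set"
  assumes S: "lin_rel S" and A: "lin_rel A"
    and "closed (rimg S 0)" and "closed (rimg A 0)" and A_S: "rimg A 0 \<subseteq> rimg S 0"
    and "x \<in> rdom S" and "x \<in> rdom A"
  shows "op_part (rel_sum S A) x = op_part S x + oproj (orth (rimg S 0)) (op_part A x)"
proof -
  let ?S0 = "rimg S 0" and ?fS = "op_part S x" and ?fA = "op_part A x"
  have fS: "(x, ?fS) \<in> S" "?fS \<in> orth ?S0" and fA: "(x, ?fA) \<in> A"
    using op_part_mem[OF S] op_part_mem[OF A] assms by blast+
  define r where "r = oproj ?S0 ?fA"
  have r: "r \<in> ?S0" "?fA - r \<in> orth ?S0"
    using oproj_mem_orth[OF csubspace_rimg_0[OF S] \<open>closed ?S0\<close>] unfolding r_def by blast+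
  have "?fA - (?fA - r) \<in> orth (orth ?S0)" using r(1) subset_orth_orth by auto
  then have Q: "oproj (orth ?S0) ?fA = ?fA - r" by (rule oproj_eqI[OF csubspace_orth r(2)])
  have "(x - 0, ?fS - r) \<in> S" using lin_rel_diff[OF S fS(1), of 0 r] r(1) by (simp add: rimg_def)
  then have "(x, (?fS - r) + ?fA) \<in> rel_sum S A" using fA by (simp add: rel_sum_memI)
  then have "(x, ?fS + (?fA - r)) \<in> rel_sum S A" by (simp add: algebra_simps)
  moreover have "?fS + (?fA - r) \<in> orth (rimg (rel_sum S A) 0)"
    using csubspace_orth[of ?S0] fS(2) r(2) unfolding rimg_rel_sum_0[OF S A A_S] csubspace_def
    by blast
  ultimately show ?thesis using op_part_eqI[OF lin_rel_rel_sum[OF S A]] Q by simp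
qed

theorem theorem3p2:
  fixes T S A :: "('a::complex_hilbert \<times> 'a) set"
  assumes "lin_rel T" and "closed T" and "hermitian T"
    and "lin_rel A" and "closed A" and "hermitian A"
    and "lin_rel S" and "selfadjoint S"
    and "rdom T = rdom S" and "rdom S \<subseteq> rdom A"
    and "T = rel_sum S A"
  shows "rimg A 0 \<subseteq> rimg S 0 \<and> rimg S 0 = rimg T 0 \<and>
         (\<forall>x \<in> rdom T. op_part T x = op_part S x + oproj (orth (rimg S 0)) (op_part A x))"
proof -
  have S0: "rimg S 0 = orth (rdom S)"
    using \<open>selfadjoint S\<close> by (rule selfadjoint_rimg_0)
  have A0: "rimg A 0 \<subseteq> rimg S 0"
    using hermitian_rimg_0_subset[OF \<open>hermitian A\<close>] orth_antimono[OF \<open>rdom S \<subseteq> rdom A\<close>]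
    unfolding S0 by blast
  have "rimg T 0 = rimg S 0"
    unfolding \<open>T = rel_sum S A\<close> using assms(7,4) A0 by (rule rimg_rel_sum_0)
  moreover have "op_part T x = op_part S x + oproj (orth (rimg S 0)) (op_part A x)"
    if "x \<in> rdom T" for x
    unfolding \<open>T = rel_sum S A\<close>
    using assms(4,7,9,10) that A0 closed_orth closed_rimg[OF \<open>closed A\<close>]
    by (intro op_part_rel_sum) (auto simp: S0)
  ultimately show ?thesis using A0 by simp
qed

end
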